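(* For every command $C$ and every expectation $f$, \[ \mathsf{ect}[C](f) \;\le\; \mathsf{ect}[C](\mathbf{0}) + \mathsf{evt}[C](f) \] pointwise.
   Context: Let $\mathrm{Var}$ be a finite set of integer-valued variables and $\Sigma = \mathrm{Var}\to\mathbb{Z}$ the set of stores; $\sigma[x\mapsto i]$ is the store updated at $x$. Boolean expressions $\varphi$ are evaluated on stores ($\sigma\models\varphi$). A distribution expression $d$ assigns to each store $\sigma$ a probability distribution $d(\sigma)$ on $\mathbb{Z}$. Commands: $C,D ::= \mathtt{skip} \mid \mathtt{tick}(r) \mid \mathtt{halt} \mid x :\approx d \mid \mathtt{if}_{[\psi]}(\varphi)\{C\}\{D\} \mid \mathtt{while}_{[\psi]}(\varphi)\{C\} \mid C \,\square\, D \mid C \oplus_p D \mid C;D$, with $r$ a nonnegative rational, $p\in[0,1]$. Expectations are functions $f:\Sigma\to[0,\infty]$, ordered pointwise, with pointwise operations, $\mathbf{r}$ the constant $r$ (so $\mathbf{0}$ is the zero function), $[\varphi](\sigma)\in\{0,1\}$ the indicator, $[c]=1$ if $c=\mathit{true}$ and $0$ otherwise, $0\cdot\infty=0$. Transformer $\mathsf{et}_c$ for $c\in\{\mathit{true},\mathit{false}\}$: $\mathsf{et}_c[\mathtt{skip}](f)=f$; $\mathsf{et}_c[\mathtt{tick}(r)](f)=[c]\cdot\mathbf{r}+f$; $\mathsf{et}_c[\mathtt{halt}](f)=\mathbf{0}$; $\mathsf{et}_c[x:\approx d](f)=\lambda\sigma.\sum_{i} d(\sigma)(i)\, f(\sigma[x\mapsto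 i])$; $\mathsf{et}_c[\mathtt{if}_{[\psi]}(\varphi)\{C\}\{D\}](f)=[\psi\wedge\varphi]\cdot\mathsf{et}_c[C](f)+[\psi\wedge\neg\varphi]\cdot\mathsf{et}_c[D](f)$; $\mathsf{et}_c[\mathtt{while}_{[\psi]}(\varphi)\{C\}](f)=\mathrm{lfp}\,F.\ [\psi\wedge\varphi]\cdot\mathsf{et}_c[C](F)+[\psi\wedge\neg\varphi]\cdot f$ (least fixed point, pointwise order); $\mathsf{et}_c[C\,\square\,D](f)=\max(\mathsf{et}_c[C](f),\mathsf{et}_c[D](f))$; $\mathsf{et}_c[C\oplus_p D](f)=\mathbf{p}\cdot\mathsf{et}_c[C](f)+\mathbf{(1-p)}\cdot\mathsf{et}_c[D](f)$; $\mathsf{et}_c[C;D](f)=\mathsf{et}_c[C](\mathsf{et}_c[D](f))$. The expected cost transformer is $\mathsf{ect}[C]=\mathsf{et}_{\mathit{true}}[C]$ and the expected value transformer is $\mathsf{evt}[C]=\mathsf{et}_{\mathit{false}}[C]$. *)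

theory Defs
  imports "HOL-Probability.Probability_Mass_Function"
begin

type_synonym 'v store = "'v \<Rightarrow> int"
type_synonym 'v bexp = "'v store \<Rightarrow> bool"
type_synonym 'v dexp = "'v store \<Rightarrow> int pmf"
type_synonym 'v expectation = "'v store \<Rightarrow> ennreal"

datatype 'v com =
    Skip
  | Tick rat
  | Halt
  | Assign 'v "'v dexp"
  | If "'v bexp" "'v bexp" "'v com" "'v com"
  | While "'v bexp" "'v bexp" "'v com"
  | NDet "'v com" "'v com"
  | PChoice "'v com" real "'v com"
  | Seq "'v com" "'v com"

primrec wf_com :: "'v com \<Rightarrow> bool" where
  "wf_com Skip = True"
| "wf_com (Tick r) = (r \<ge> 0)"
| "wf_com Halt = True"
| "wf_com (Assign x d) = True"
| "wf_com (If \<psi> \<phi> C D) = (wf_com C \<and> wf_com D)"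
| "wf_com (While \<psi> \<phi> C) = wf_com C"
| "wf_com (NDet C D) = (wf_com C \<and> wf_com D)"
| "wf_com (PChoice C p D) = (0 \<le> p \<and> p \<le> 1 \<and> wf_com C \<and> wf_com D)"
| "wf_com (Seq C D) = (wf_com C \<and> wf_com D)"

primrec et :: "bool \<Rightarrow> 'v com \<Rightarrow> 'v expectation \<Rightarrow> 'v expectation" where
  "et c Skip f = f"
| "et c (Tick r) f = (\<lambda>\<sigma>. of_bool c * ennreal (of_rat r) + f \<sigma>)"
| "et c Halt f = (\<lambda>\<sigma>. 0)"
| "et c (Assign x d) f = (\<lambda>\<sigma>. \<integral>\<^sup>+ i. f (\<sigma>(x := i)) \<partial>measure_pmf (d \<sigma>))"
| "et c (If \<psi> \<phi> C D) f = (\<lambda>\<sigma>. of_bool (\<psi> \<sigma> \<and> \<phi> \<sigma>) * et c C f \<sigma>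
                                + of_bool (\<psi> \<sigma> \<and> \<not> \<phi> \<sigma>) * et c D f \<sigma>)"
| "et c (While \<psi> \<phi> C) f = lfp (\<lambda>F \<sigma>. of_bool (\<psi> \<sigma> \<and> \<phi> \<sigma>) * et c C F \<sigma>
                                + of_bool (\<psi> \<sigma> \<and> \<not> \<phi> \<sigma>) * f \<sigma>)"
| "et c (NDet C D) f = (\<lambda>\<sigma>. max (et c C f \<sigma>) (et c D f \<sigma>))"
| "et c (PChoice C p D) f = (\<lambda>\<sigma>. ennreal p * et c C f \<sigma> + ennreal (1 - p) * et c D f \<sigma>)"
| "et c (Seq C D) f = et c C (et c D f)"

definition ect :: "'v com \<Rightarrow> 'v expectation \<Rightarrow> 'v expectation" where
  "ect = et True"

definition evt :: "'v com \<Rightarrow> 'v expectation \<Rightarrow> 'v expectation" where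
  "evt = et False"

end

theory Submission
  imports Defs
begin

text \<open>Costs are paid along a run regardless of the value it finally returns, so splitting a
post-expectation \<open>g + h\<close> into a part weighed together with the costs and a part weighed
without them can only lose: \<open>ect C (g + h) \<le> ect C g + evt C h\<close> by structural induction.
For loops this is Park induction, the sum of the two least fixed points being a prefixed point of
the loop functional for \<open>g + h\<close>. Equality can fail because the maxima of a nondeterministic
choice may be attained by different branches. The split needs no well-formedness, since \<open>ennreal\<close> truncates negative weights to zero.\<close>

lemma et_mono: "f \<le> g \<Longrightarrow> et c C f \<le> et c C g"
proof (induction C arbitrary: f g)
  case (While \<psi> \<phi> C)
  show ?case
    unfolding et.simps
    by (intro lfp_mono le_funI add_mono mult_left_mono order_refl)
      (use While.prems in \<open>simp_all add: le_fun_def\<close>)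
next
  case (NDet C D)
  then show ?case
    by (fastforce simp: le_fun_def intro: le_max_iff_disj[THEN iffD2])
qed (auto simp: le_fun_def intro!: nn_integral_mono add_mono mult_left_mono)

lemma et_While_unfold:
  "et c (While \<psi> \<phi> C) f =
     (\<lambda>\<sigma>. of_bool (\<psi> \<sigma> \<and> \<phi> \<sigma>) * et c C (et c (While \<psi> \<phi> C) f) \<sigma> + of_bool (\<psi> \<sigma> \<and> \<not> \<phi> \<sigma>) * f \<sigma>)"
proof -
  have "mono (\<lambda>F \<sigma>. of_bool (\<psi> \<sigma> \<and> \<phi> \<sigma>) * et c C F \<sigma> + of_bool (\<psi> \<sigma> \<and> \<not> \<phi> \<sigma>) * f \<sigma>)"
    using et_mono[of _ _ c C] by (auto intro!: monoI le_funI add_mono mult_left_mono simp: le_fun_def)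
  then show ?thesis
    unfolding et.simps by (rule lfp_unfold)
qed

lemma et_While_lowerbound:
  assumes "(\<lambda>\<sigma>. of_bool (\<psi> \<sigma> \<and> \<phi> \<sigma>) * et c C F \<sigma> + of_bool (\<psi> \<sigma> \<and> \<not> \<phi> \<sigma>) * f \<sigma>) \<le> F"
  shows "et c (While \<psi> \<phi> C) f \<le> F"
  unfolding et.simps using assms by (rule lfp_lowerbound)

lemma et_True_add_le:
  "et True C (\<lambda>\<sigma>. g \<sigma> + h \<sigma>) \<le> (\<lambda>\<sigma>. et True C g \<sigma> + et False C h \<sigma>)"
proof (induction C arbitrary: g h)
  case (Assign x d)
  then show ?case
    by (auto simp: le_fun_def nn_integral_add)
next
  case (While \<psi> \<phi> C)
  let ?A = "et True (While \<psi> \<phi> C) g" and ?B = "et False (While \<psi> \<phi> C) h"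
  show ?case
  proof (rule et_While_lowerbound, rule le_funI)
    fix \<sigma>
    have "et True C (\<lambda>\<sigma>. ?A \<sigma> + ?B \<sigma>) \<sigma> \<le> et True C ?A \<sigma> + et False C ?B \<sigma>"
      using While.IH[of ?A ?B] by (simp add: le_fun_def)
    then have "of_bool (\<psi> \<sigma> \<and> \<phi> \<sigma>) * et True C (\<lambda>\<sigma>. ?A \<sigma> + ?B \<sigma>) \<sigma> + of_bool (\<psi> \<sigma> \<and> \<not> \<phi> \<sigma>) * (g \<sigma> + h \<sigma>)
        \<le> (of_bool (\<psi> \<sigma> \<and> \<phi> \<sigma>) * et True C ?A \<sigma> + of_bool (\<psi> \<sigma> \<and> \<not> \<phi> \<sigma>) * g \<sigma>)
          + (of_bool (\<psi> \<sigma> \<and> \<phi> \<sigma>) * et False C ?B \<sigma> + of_bool (\<psi> \<sigma> \<and> \<not> \<phi> \<sigma>) * h \<sigma>)"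
      by (auto simp: algebra_simps)
    also have "\<dots> = ?A \<sigma> + ?B \<sigma>"
      by (subst (1 2) et_While_unfold) simp
    finally show "of_bool (\<psi> \<sigma> \<and> \<phi> \<sigma>) * et True C (\<lambda>\<sigma>. ?A \<sigma> + ?B \<sigma>) \<sigma>
        + of_bool (\<psi> \<sigma> \<and> \<not> \<phi> \<sigma>) * (g \<sigma> + h \<sigma>) \<le> ?A \<sigma> + ?B \<sigma>" .
  qed
next
  case (NDet C D)
  show ?case
  proof (rule le_funI)
    fix \<sigma>
    let ?M = "et True (NDet C D) g \<sigma> + et False (NDet C D) h \<sigma>"
    have "et True C (\<lambda>\<sigma>. g \<sigma> + h \<sigma>) \<sigma> \<le> et True C g \<sigma> + et False C h \<sigma>"
      and "et True D (\<lambda>\<sigma>. g \<sigma> + h \<sigma>) \<sigma> \<le> et True D g \<sigma> + et False D h \<sigma>"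
      using NDet.IH by (simp_all add: le_fun_def)
    moreover have "et True C g \<sigma> + et False C h \<sigma> \<le> ?M"
      and "et True D g \<sigma> + et False D h \<sigma> \<le> ?M"
      by (intro add_mono; simp)+
    ultimately show "et True (NDet C D) (\<lambda>\<sigma>. g \<sigma> + h \<sigma>) \<sigma> \<le> ?M"
      by simp (meson order_trans)
  qed
next
  case (PChoice C p D)
  show ?case
  proof (rule le_funI)
    fix \<sigma>
    have "ennreal p * et True C (\<lambda>\<sigma>. g \<sigma> + h \<sigma>) \<sigma> + ennreal (1 - p) * et True D (\<lambda>\<sigma>. g \<sigma> + h \<sigma>) \<sigma>
      \<le> ennreal p * (et True C g \<sigma> + et False C h \<sigma>) + ennreal (1 - p) * (et True D g \<sigma> + et False D h \<sigma>)"
      using PChoice.IH by (intro add_mono mult_left_mono) (simp_all add: le_fun_def)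
    then show "et True (PChoice C p D) (\<lambda>\<sigma>. g \<sigma> + h \<sigma>) \<sigma>
        \<le> et True (PChoice C p D) g \<sigma> + et False (PChoice C p D) h \<sigma>"
      by (simp add: algebra_simps)
  qed
next
  case (Seq C D)
  have "et True C (et True D (\<lambda>\<sigma>. g \<sigma> + h \<sigma>)) \<le> et True C (\<lambda>\<sigma>. et True D g \<sigma> + et False D h \<sigma>)"
    using Seq.IH(2) by (rule et_mono)
  also have "\<dots> \<le> (\<lambda>\<sigma>. et True C (et True D g) \<sigma> + et False C (et False D h) \<sigma>)"
    by (rule Seq.IH(1))
  finally show ?case by simp
qed (auto simp: le_fun_def)

lemma ect_add_le_ect_evt: "ect C (\<lambda>\<sigma>. g \<sigma> + h \<sigma>) \<le> (\<lambda>\<sigma>. ect C g \<sigma> + evt C h \<sigma>)"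
  unfolding ect_def evt_def by (rule et_True_add_le)

theorem mainTheorem7:
  fixes C :: "('v::finite) com" and f :: "'v expectation"
  assumes "wf_com C"
  shows "ect C f \<le> (\<lambda>\<sigma>. ect C (\<lambda>_. 0) \<sigma> + evt C f \<sigma>)"
  using ect_add_le_ect_evt[of C "\<lambda>_. 0" f] by simp

end
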